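(* For every integer $a\ge1$ and every partition $\mu$, $$B_a\,e_\mu\Big|_{q\to1+q}\;=\;\sum_{\nu\vdash|\mu|+a}Q_{\nu,\mu,a}(q)\,e_\nu[X]$$ for some polynomials $Q_{\nu,\mu,a}(q)$ with nonnegative integer coefficients.
   Context: For an integer $a\ge1$, the operator $B_a$ acts on symmetric functions $F[X]$ (with coefficients in $\mathbb{Q}[q]$) by $$B_aF[X]=F\Big[X+\epsilon\frac{1-q}{z}\Big]\sum_{r\ge0}z^re_r[X]\Big|_{z^a},$$ where $|_{z^a}$ denotes taking the coefficient of $z^a$, the brackets denote plethystic substitution, and $p_k[\epsilon]=(-1)^k$. Thus $p_k[X+\epsilon\frac{1-q}{z}]=p_k[X]+(-1)^k\frac{1-q^k}{z^k}$. Equivalently, $B_a=\sum_{r,s\ge0}(-1)^sq^r\,e_{a+r+s}\,e_r^\perp h_s^\perp$, where $f^\perp$ is the Hall-adjoint of multiplication by $f$. Here $e_\mu=e_{\mu_1}e_{\mu_2}\cdots$, and $|_{q\to1+q}$ means substituting $1+q$ for $q$. *)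

theory Defs
  imports "HOL-Library.Multiset" "HOL-Computational_Algebra.Polynomial"
begin

text \<open>Symmetric functions over Q[q] are represented in the power-sum basis:
  Lambda_{Q[q]} = Q[q][p_1,p_2,...].  A symmetric function F is given by its
  coefficient function: F lam is the coefficient of p_lam, where a partition lam
  is a multiset of positive naturals.\<close>

type_synonym symf = "nat multiset \<Rightarrow> rat poly"

definition is_partition :: "nat multiset \<Rightarrow> bool" where
  "is_partition lam \<longleftrightarrow> 0 \<notin># lam"

definition sym_one :: symf where
  "sym_one lam = (if lam = {#} then 1 else 0)"

text \<open>product: p_alpha p_beta = p_(alpha+beta)\<close>
definition symprod :: "symf \<Rightarrow> symf \<Rightarrow> symf" where
  "symprod f g lam = (\<Sum>alpha\<in>{alpha. alpha \<subseteq># lam}. f alpha * g (lam - alpha))"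

definition psym :: "nat \<Rightarrow> symf" where
  "psym k lam = (if lam = {#k#} then 1 else 0)"

definition zee :: "nat multiset \<Rightarrow> rat" where
  "zee lam = (\<Prod>k\<in>set_mset lam. of_nat k ^ count lam k * of_nat (fact (count lam k)))"

text \<open>elementary symmetric function e_r = sum_{lam |- r} eps_lam p_lam / z_lam\<close>
definition e_sym :: "nat \<Rightarrow> symf" where
  "e_sym r lam = (if is_partition lam \<and> sum_mset lam = r
      then [: (-1) ^ (r - size lam) / zee lam :] else 0)"

definition e_part :: "nat multiset \<Rightarrow> symf" where
  "e_part mu = foldr (\<lambda>r acc. symprod (e_sym r) acc) (sorted_list_of_multiset mu) sym_one"

text \<open>Plethystic substitution of a power-sum monomial:
  psub ks d = coefficient of z^(-d) in prod_{k in ks} (p_k + (-1)^k (1 - q^k) z^(-k)),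
  i.e. p_ks[X + eps (1-q)/z] at z^(-d).\<close>
fun psub :: "nat list \<Rightarrow> nat \<Rightarrow> symf" where
  "psub [] d = (if d = 0 then sym_one else (\<lambda>_. 0))"
| "psub (k # ks) d = (\<lambda>lam. symprod (psym k) (psub ks d) lam
      + (if k \<le> d then (-1) ^ k * (1 - monom 1 k) * psub ks (d - k) lam else 0))"

text \<open>B_a F = F[X + eps(1-q)/z] * sum_r z^r e_r |_{z^a}
  = sum_lam F_lam sum_d (p_lam[X + eps(1-q)/z] at z^(-d)) * e_(a+d).\<close>
definition Bop :: "nat \<Rightarrow> symf \<Rightarrow> symf" where
  "Bop a F nu = (\<Sum>lam\<in>{lam. F lam \<noteq> 0}. \<Sum>d\<in>{0..sum_mset lam}.
       F lam * symprod (psub (sorted_list_of_multiset lam) d) (e_sym (a + d)) nu)"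

definition q_shift :: "symf \<Rightarrow> symf" where
  "q_shift F lam = pcompose (F lam) [:1, 1:]"

end

theory Submission
  imports Defs "HOL-Library.Poly_Mapping"
begin

text \<open>Identify symmetric functions over \<open>\<rat>[q]\<close> with the monoid algebra of multisets, \<open>p\<^sub>\<lambda>\<close>
  being the basis element \<open>\<lambda>\<close>. The substitution \<open>X \<mapsto> X + \<epsilon>(1 - q)/z\<close> is the ring homomorphism
  sending \<open>p\<^sub>k\<close> to \<open>p\<^sub>k + (-1)\<^sup>k(1 - q\<^sup>k) z\<^sup>-\<^sup>k\<close>, and \<open>B\<^sub>a F = \<Sum>\<^sub>d [z\<^sup>-\<^sup>d] F[X + \<epsilon>(1 - q)/z] e\<^sub>a\<^sub>+\<^sub>d\<close>.
  Applying the homomorphism to Newton's identity \<open>m e\<^sub>m = \<Sum>\<^sub>i (-1)\<^sup>i\<^sup>-\<^sup>1 p\<^sub>i e\<^sub>m\<^sub>-\<^sub>i\<close>, and using the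
  same identity for the alphabet \<open>\<epsilon>(1 - q)\<close>, whose elementary functions are \<open>e\<^sub>0 = 1\<close> and
  \<open>e\<^sub>k = (q - 1) q\<^sup>k\<^sup>-\<^sup>1\<close>, gives by induction on \<open>m\<close>
  \<open>e\<^sub>m[X + \<epsilon>(1 - q)/z] = \<Sum>\<^sub>k e\<^sub>k[\<epsilon>(1 - q)] e\<^sub>m\<^sub>-\<^sub>k z\<^sup>-\<^sup>k\<close>.
  So every \<open>z\<close>-coefficient of \<open>e\<^sub>\<mu>[X + \<epsilon>(1 - q)/z]\<close> is a combination of products \<open>e\<^sub>\<nu>\<close> whose
  coefficients are products of \<open>q\<close> and \<open>q - 1\<close>, which have nonnegative integer coefficients after
  \<open>q \<mapsto> 1 + q\<close>; multiplying by \<open>e\<^sub>a\<^sub>+\<^sub>d\<close> and summing over \<open>d\<close> preserves this.\<close>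

section \<open>Symmetric functions as a monoid algebra\<close>

type_synonym sfun = "nat multiset \<Rightarrow>\<^sub>0 rat poly"

abbreviation pcoeff :: "sfun \<Rightarrow> nat multiset \<Rightarrow> rat poly" where
  "pcoeff \<equiv> Poly_Mapping.lookup"

lemma finite_submultisets: "finite {A. A \<subseteq># (M :: 'a multiset)}"
proof -
  have "{A. A \<subseteq># M} \<subseteq> mset ` {xs. set xs \<subseteq> set_mset M \<and> length xs \<le> size M}"
  proof
    fix A assume "A \<in> {A. A \<subseteq># M}"
    moreover obtain xs where "mset xs = A"
      using ex_mset by blast
    ultimately show "A \<in> mset ` {xs. set xs \<subseteq> set_mset M \<and> length xs \<le> size M}"
      using set_mset_mono[of A M] size_mset_mono[of A M] by auto
  qed
  then show ?thesis
    by (rule finite_subset) (intro finite_imageI finite_lists_length_le, simp)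
qed

lemma pcoeff_times: "pcoeff (f * g) = symprod (pcoeff f) (pcoeff g)"
proof
  fix lam
  have fin: "finite {a. pcoeff f a \<noteq> 0}" "finite {a. pcoeff g a \<noteq> 0}" by auto
  have "pcoeff (f * g) lam = (\<Sum>(a, b). pcoeff f a * pcoeff g b when lam = a + b)"
    by (simp add: times_poly_mapping.rep_eq prod_fun_unfold_prod[OF fin])
  also have "\<dots> = (\<Sum>(a, b)\<in>(\<lambda>a. (a, lam - a)) ` {a. a \<subseteq># lam}.
                      pcoeff f a * pcoeff g b when lam = a + b)"
    by (rule Sum_any.expand_superset)
      (auto simp: finite_submultisets when_def split: if_splits)
  also have "\<dots> = symprod (pcoeff f) (pcoeff g) lam"
    unfolding symprod_def
    by (subst sum.reindex) (auto simp: inj_on_def when_def subset_mset.add_diff_inverse intro!: sum.cong)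
  finally show "pcoeff (f * g) lam = symprod (pcoeff f) (pcoeff g) lam" .
qed

definition scalar :: "rat poly \<Rightarrow> sfun" where
  "scalar c = Poly_Mapping.single {#} c"

lemma scalar_0 [simp]: "scalar 0 = 0"
  and scalar_1 [simp]: "scalar 1 = 1"
  and scalar_add: "scalar (c + d) = scalar c + scalar d"
  and scalar_mult: "scalar (c * d) = scalar c * scalar d"
  by (simp_all add: scalar_def single_add mult_single)

lemma scalar_sum: "scalar (sum f A) = (\<Sum>i\<in>A. scalar (f i))"
  by (induction A rule: infinite_finite_induct) (simp_all add: scalar_add)

lemma of_nat_sfun: "(of_nat n :: sfun) = scalar (of_nat n)"
  by (simp add: scalar_def)

lemma sfun_of_nat_mult_cancel:
  assumes "m > 0" "of_nat m * x = (of_nat m * y :: sfun)"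
  shows "x = y"
proof -
  have "[:1 / of_nat m:] * of_nat m = (1 :: rat poly)"
    using assms(1) by (simp add: of_nat_poly mult_to_poly one_pCons)
  then have inverse: "scalar [:1 / of_nat m:] * of_nat m = 1"
    by (simp add: of_nat_sfun flip: scalar_mult)
  have "x = scalar [:1 / of_nat m:] * (of_nat m * x)"
    by (simp add: inverse flip: mult.assoc)
  also have "\<dots> = y"
    by (simp add: assms(2) inverse flip: mult.assoc)
  finally show ?thesis .
qed

lemma pcoeff_scalar_times: "pcoeff (scalar c * F) lam = c * pcoeff F lam"
proof -
  have "pcoeff (scalar c * F) lam =
          (\<Sum>A\<in>{A. A \<subseteq># lam}. if A = {#} then c * pcoeff F (lam - A) else 0)"
    unfolding pcoeff_times symprod_def scalar_def lookup_single
    by (intro sum.cong) (auto simp: when_def)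
  then show ?thesis
    by (simp add: finite_submultisets)
qed

definition power_sum :: "nat \<Rightarrow> sfun" where
  "power_sum k = Poly_Mapping.single {#k#} 1"

lemma pcoeff_power_sum: "pcoeff (power_sum k) = psym k"
  by (auto simp: power_sum_def psym_def lookup_single when_def)

lemma pcoeff_power_sum_times:
  "pcoeff (power_sum i * F) lam = (if i \<in># lam then pcoeff F (lam - {#i#}) else 0)"
proof -
  have "pcoeff (power_sum i * F) lam =
          (\<Sum>A\<in>{A. A \<subseteq># lam}. if A = {#i#} then pcoeff F (lam - A) else 0)"
    unfolding pcoeff_times pcoeff_power_sum symprod_def psym_def
    by (intro sum.cong) auto
  then show ?thesis
    by (simp add: finite_submultisets)
qed

definition partitions :: "nat \<Rightarrow> nat multiset set" where
  "partitions N = {nu. is_partition nu \<and> sum_mset nu = N}"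

lemma size_le_sum_mset: "is_partition nu \<Longrightarrow> size nu \<le> sum_mset nu"
  unfolding is_partition_def by (induction nu) (auto simp: Suc_le_eq)

lemma member_le_sum_mset: "x \<in># M \<Longrightarrow> x \<le> sum_mset (M :: nat multiset)"
  by (metis le_add1 multi_member_split sum_mset.add_mset)

lemma finite_partitions: "finite (partitions N)"
proof -
  have "partitions N \<subseteq> mset ` {xs. set xs \<subseteq> {0..N} \<and> length xs \<le> N}"
  proof
    fix nu assume "nu \<in> partitions N"
    then have nu: "is_partition nu" "sum_mset nu = N" by (auto simp: partitions_def)
    moreover obtain xs where "mset xs = nu"
      using ex_mset by blast
    ultimately show "nu \<in> mset ` {xs. set xs \<subseteq> {0..N} \<and> length xs \<le> N}"
      using size_le_sum_mset[OF nu(1)] member_le_sum_mset[of _ nu] by auto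
  qed
  then show ?thesis
    by (rule finite_subset) (intro finite_imageI finite_lists_length_le, simp)
qed

lemma partitions_add: "nu \<in> partitions N \<Longrightarrow> nu' \<in> partitions K \<Longrightarrow> nu + nu' \<in> partitions (N + K)"
  by (auto simp: partitions_def is_partition_def)

definition elem :: "nat \<Rightarrow> sfun" where
  "elem r = Abs_poly_mapping (e_sym r)"

lemma pcoeff_elem: "pcoeff (elem r) = e_sym r"
proof -
  have "{lam. e_sym r lam \<noteq> 0} \<subseteq> partitions r"
    by (auto simp: e_sym_def partitions_def split: if_splits)
  then show ?thesis
    unfolding elem_def by (intro Abs_poly_mapping_inverse) (auto intro: finite_subset finite_partitions)
qed

lemma elem_0 [simp]: "elem 0 = 1"
proof (rule poly_mapping_eqI)
  fix lam
  have "is_partition lam \<and> sum_mset lam = 0 \<longleftrightarrow> lam = {#}"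
    by (auto simp: is_partition_def sum_mset_0_iff) (metis multiset_nonemptyE)
  then show "pcoeff (elem 0) lam = pcoeff 1 lam"
    by (auto simp: pcoeff_elem e_sym_def lookup_one when_def zee_def)
qed

definition elem_part :: "nat multiset \<Rightarrow> sfun" where
  "elem_part nu = prod_mset (image_mset elem nu)"

lemma elem_part_add: "elem_part (nu + nu') = elem_part nu * elem_part nu'"
  by (simp add: elem_part_def)

lemma pcoeff_elem_part: "pcoeff (elem_part nu) = e_part nu"
proof -
  have "pcoeff (prod_list (map elem xs)) = foldr (\<lambda>r acc. symprod (e_sym r) acc) xs sym_one" for xs
    by (induction xs) (auto simp: sym_one_def lookup_one when_def pcoeff_times pcoeff_elem)
  moreover have "elem_part nu = prod_list (map elem (sorted_list_of_multiset nu))"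
    by (metis elem_part_def mset_map mset_sorted_list_of_multiset prod_mset_prod_list)
  ultimately show ?thesis
    by (simp add: e_part_def)
qed

section \<open>Newton's identity\<close>

lemma sum_mset_multiplicity: "sum_mset M = (\<Sum>x\<in>set_mset M. count M x * x)" for M :: "nat multiset"
proof (induction M)
  case (add x M)
  have "(\<Sum>y\<in>set_mset (add_mset x M). count (add_mset x M) y * y) =
          x + (\<Sum>y\<in>set_mset M. count M y * y)"
  proof (cases "x \<in># M")
    case True
    then have "(\<Sum>y\<in>set_mset M. count (add_mset x M) y * y) =
                 (\<Sum>y\<in>set_mset M. count M y * y + (if y = x then x else 0))"
      by (intro sum.cong) auto
    with True show ?thesis
      by (simp add: sum.distrib insert_absorb)
  next
    case False
    then show ?thesis
      by (simp add: not_in_iff, intro sum.cong) auto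
  qed
  with add show ?case by simp
qed simp

lemma zee_add_mset: "zee (add_mset i M) = zee M * of_nat i * of_nat (count (add_mset i M) i)"
proof -
  let ?f = "\<lambda>N k. of_nat k ^ count N k * of_nat (fact (count N k)) :: rat"
  let ?S = "insert i (set_mset M)"
  have zee_on: "zee N = (\<Prod>k\<in>?S. ?f N k)" if "set_mset N \<subseteq> ?S" for N
    unfolding zee_def using that by (intro prod.mono_neutral_left) (auto simp: not_in_iff)
  have "zee (add_mset i M) = (\<Prod>k\<in>?S. ?f (add_mset i M) k)"
    by (rule zee_on) auto
  also have "\<dots> = ?f (add_mset i M) i * (\<Prod>k\<in>?S - {i}. ?f (add_mset i M) k)"
    by (rule prod.remove) auto
  also have "(\<Prod>k\<in>?S - {i}. ?f (add_mset i M) k) = (\<Prod>k\<in>?S - {i}. ?f M k)"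
    by (intro prod.cong) auto
  finally have "zee (add_mset i M) = ?f (add_mset i M) i * (\<Prod>k\<in>?S - {i}. ?f M k)" .
  moreover have "zee M = (\<Prod>k\<in>?S. ?f M k)"
    by (rule zee_on) auto
  then have "zee M = ?f M i * (\<Prod>k\<in>?S - {i}. ?f M k)"
    using prod.remove[of ?S i "?f M"] by simp
  ultimately show ?thesis
    by (simp add: fact_Suc algebra_simps)
qed

lemma zee_nonzero: "is_partition lam \<Longrightarrow> zee lam \<noteq> 0"
  unfolding zee_def is_partition_def by (auto simp: prod_zero_iff)

lemma neg_one_power: "(-1 :: 'a :: comm_ring_1 poly) ^ n = [:(-1) ^ n:]"
  by (induction n) simp_all

lemma newton_identity_coeff:
  "of_nat r * e_sym r lam =
     (\<Sum>i\<in>{1..r}. (-1) ^ (i - 1) * (if i \<in># lam then e_sym (r - i) (lam - {#i#}) else 0))"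
proof (cases "is_partition lam \<and> sum_mset lam = r")
  case False
  have "(if i \<in># lam then e_sym (r - i) (lam - {#i#}) else 0) = 0" if "i \<in> {1..r}" for i
  proof (cases "i \<in># lam")
    case True
    define M where "M = lam - {#i#}"
    have lam: "lam = add_mset i M" using True by (simp add: M_def)
    have "\<not> (is_partition M \<and> sum_mset M = r - i)"
      using False that by (auto simp: lam is_partition_def)
    then show ?thesis
      using True by (auto simp: e_sym_def simp flip: M_def)
  qed simp
  then have "(\<Sum>i\<in>{1..r}. (-1) ^ (i - 1) * (if i \<in># lam then e_sym (r - i) (lam - {#i#}) else 0)) = 0"
    by (auto intro: sum.neutral)
  with False show ?thesis
    by (auto simp: e_sym_def)
next
  case True
  then have part: "is_partition lam" and sum_lam: "sum_mset lam = r" by auto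
  define c where "c = (-1) ^ (r - size lam) / zee lam"
  have term_eq: "(-1) ^ (i - 1) * (if i \<in># lam then e_sym (r - i) (lam - {#i#}) else 0) =
                   (if i \<in># lam then [:c * of_nat (count lam i * i):] else 0)" if "i \<in> {1..r}" for i
  proof (cases "i \<in># lam")
    case True
    define M where "M = lam - {#i#}"
    have lam: "lam = add_mset i M" using True by (simp add: M_def)
    have part_M: "is_partition M" and sum_M: "sum_mset M = r - i"
      using part sum_lam by (auto simp: is_partition_def lam)
    have "(i - 1) + (r - i - size M) = r - size lam"
      using that size_le_sum_mset[OF part_M] sum_M by (auto simp: lam)
    then have sign: "(-1 :: rat) ^ (i - 1) * (-1) ^ (r - i - size M) = (-1) ^ (r - size lam)"
      by (simp flip: power_add)
    have zee_lam: "zee lam = zee M * of_nat i * of_nat (count lam i)"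
      unfolding lam by (rule zee_add_mset)
    have "(-1 :: rat) ^ (i - 1) * ((-1) ^ (r - i - size M) / zee M) = (-1) ^ (r - size lam) / zee M"
      by (simp only: sign times_divide_eq_right)
    also have "\<dots> = c * of_nat (count lam i * i)"
      using zee_nonzero[OF part_M] that True by (simp add: c_def zee_lam field_simps)
    finally have scalar_eq: "(-1 :: rat) ^ (i - 1) * ((-1) ^ (r - i - size M) / zee M) =
                               c * of_nat (count lam i * i)" .
    have "(-1) ^ (i - 1) * e_sym (r - i) M = [:(-1) ^ (i - 1):] * [:(-1) ^ (r - i - size M) / zee M:]"
      using part_M sum_M by (simp add: e_sym_def neg_one_power)
    also have "\<dots> = [:c * of_nat (count lam i * i):]"
      by (simp only: mult_to_poly scalar_eq)
    finally show ?thesis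
      using True by (simp add: M_def)
  qed simp
  have "(\<Sum>i\<in>{1..r}. (-1) ^ (i - 1) * (if i \<in># lam then e_sym (r - i) (lam - {#i#}) else 0)) =
          (\<Sum>i\<in>{1..r}. if i \<in># lam then [:c * of_nat (count lam i * i):] else 0)"
    by (rule sum.cong[OF refl term_eq])
  also have "\<dots> = (\<Sum>i\<in>{i\<in>{1..r}. i \<in># lam}. [:c * of_nat (count lam i * i):])"
    by (rule sum.inter_filter[symmetric]) simp
  also have "{i\<in>{1..r}. i \<in># lam} = set_mset lam"
    using part sum_lam member_le_sum_mset[of _ lam]
    by (auto simp: is_partition_def Suc_le_eq intro: gr0I)
  also have "(\<Sum>i\<in>set_mset lam. [:c * of_nat (count lam i * i):]) = [:c * of_nat r:]"
    unfolding sum_to_poly sum_distrib_left[symmetric] of_nat_sum[symmetric]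
      sum_mset_multiplicity[symmetric] sum_lam ..
  also have "\<dots> = of_nat r * e_sym r lam"
    using True by (simp add: e_sym_def c_def of_nat_poly)
  finally show ?thesis ..
qed

lemma newton_identity:
  "of_nat r * elem r = (\<Sum>i\<in>{1..r}. scalar ((-1) ^ (i - 1)) * (power_sum i * elem (r - i)))"
proof (rule poly_mapping_eqI)
  fix lam
  show "pcoeff (of_nat r * elem r) lam =
          pcoeff (\<Sum>i\<in>{1..r}. scalar ((-1) ^ (i - 1)) * (power_sum i * elem (r - i))) lam"
    unfolding of_nat_sfun lookup_sum pcoeff_scalar_times pcoeff_power_sum_times pcoeff_elem
      newton_identity_coeff
    by (intro sum.cong) auto
qed

section \<open>The alphabet \<open>\<epsilon>(1 - q)\<close>\<close>

text \<open>\<open>eps_elem q k\<close> is \<open>e\<^sub>k[\<epsilon>(1 - q)]\<close> and \<open>eps_power_sum k\<close> is \<open>p\<^sub>k[\<epsilon>(1 - q)]\<close>;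
  together with \<open>sign_eps_power_sum\<close>, \<open>eps_newton\<close> is Newton's identity for this alphabet.\<close>

fun eps_elem :: "'a :: comm_ring_1 \<Rightarrow> nat \<Rightarrow> 'a" where
  "eps_elem x 0 = 1"
| "eps_elem x (Suc k) = (x - 1) * x ^ k"

lemma eps_elem_Suc_eq: "eps_elem x (Suc m) = x * eps_elem x m - (if m = 0 then 1 else 0)"
  by (cases m) (simp_all add: algebra_simps)

lemma eps_newton_Suc:
  "(\<Sum>j\<le>n. (x ^ Suc j - 1) * eps_elem x (n - j)) = of_nat (Suc n) * (x - 1) * x ^ n"
proof (induction n)
  case (Suc n)
  have "(\<Sum>j\<le>n. (x ^ Suc j - 1) * eps_elem x (Suc n - j)) =
          (\<Sum>j\<le>n. x * ((x ^ Suc j - 1) * eps_elem x (n - j)) - (if j = n then x ^ Suc n - 1 else 0))"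
    by (intro sum.cong) (auto simp: Suc_diff_le eps_elem_Suc_eq algebra_simps simp del: eps_elem.simps)
  also have "\<dots> = x * (of_nat (Suc n) * (x - 1) * x ^ n) - (x ^ Suc n - 1)"
    unfolding sum_subtractf sum_distrib_left[symmetric] Suc.IH by simp
  finally show ?case
    by (simp add: algebra_simps)
qed simp

lemma eps_newton:
  "of_nat d * eps_elem x d = (\<Sum>i\<in>{1..d}. (x ^ i - 1) * eps_elem x (d - i))"
proof (cases d)
  case (Suc n)
  have "(\<Sum>i\<in>{1..Suc n}. (x ^ i - 1) * eps_elem x (Suc n - i)) =
          (\<Sum>j\<le>n. (x ^ Suc j - 1) * eps_elem x (n - j))"
    unfolding One_nat_def sum.shift_bounds_cl_Suc_ivl atLeast0AtMost[symmetric] by simp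
  also have "\<dots> = of_nat (Suc n) * (x - 1) * x ^ n"
    by (rule eps_newton_Suc)
  finally show ?thesis
    using Suc by (simp add: algebra_simps)
qed simp

definition eps_power_sum :: "nat \<Rightarrow> rat poly" where
  "eps_power_sum k = (-1) ^ k * (1 - monom 1 k)"

lemma sign_eps_power_sum: "i \<ge> 1 \<Longrightarrow> (-1) ^ (i - 1) * eps_power_sum i = [:0, 1:] ^ i - 1"
  by (cases i) (simp_all add: eps_power_sum_def monom_altdef algebra_simps)

section \<open>Plethystic substitution \<open>X \<mapsto> X + \<epsilon>(1 - q)/z\<close>\<close>

text \<open>The polynomial variable stands for \<open>1/z\<close>:
  \<open>p\<^sub>k[X + \<epsilon>(1 - q)/z] = p\<^sub>k + p\<^sub>k[\<epsilon>(1 - q)] z\<^sup>-\<^sup>k\<close>.\<close>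

definition pleth_factor :: "nat \<Rightarrow> sfun poly" where
  "pleth_factor k = [:power_sum k:] + monom (scalar (eps_power_sum k)) k"

definition pleth :: "sfun \<Rightarrow> sfun poly" where
  "pleth F = (\<Sum>lam\<in>Poly_Mapping.keys F.
                smult (scalar (pcoeff F lam)) (prod_mset (image_mset pleth_factor lam)))"

lemma pleth_eq_sum_superset:
  assumes "finite A" "Poly_Mapping.keys F \<subseteq> A"
  shows "pleth F = (\<Sum>lam\<in>A. smult (scalar (pcoeff F lam)) (prod_mset (image_mset pleth_factor lam)))"
  unfolding pleth_def using assms by (intro sum.mono_neutral_left) (auto simp: in_keys_iff)

lemma pleth_add: "pleth (F + G) = pleth F + pleth G"
proof -
  let ?A = "Poly_Mapping.keys F \<union> Poly_Mapping.keys G"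
  have "Poly_Mapping.keys (F + G) \<subseteq> ?A"
    by (rule keys_add)
  then show ?thesis
    by (simp add: pleth_eq_sum_superset[of ?A] lookup_add scalar_add smult_add_left sum.distrib)
qed

lemma pleth_0: "pleth 0 = 0"
  by (simp add: pleth_def)

lemma pleth_sum: "pleth (sum f A) = (\<Sum>x\<in>A. pleth (f x))"
  by (induction A rule: infinite_finite_induct) (simp_all add: pleth_0 pleth_add)

lemma pleth_single:
  "pleth (Poly_Mapping.single lam c) = smult (scalar c) (prod_mset (image_mset pleth_factor lam))"
  by (cases "c = 0") (auto simp: pleth_def)

lemma sum_single_lookup: "F = (\<Sum>a\<in>Poly_Mapping.keys F. Poly_Mapping.single a (Poly_Mapping.lookup F a))"
  by (rule poly_mapping_eqI) (simp add: lookup_sum lookup_single when_def in_keys_iff)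

lemma pleth_mult: "pleth (F * G) = pleth F * pleth G"
proof -
  have "F * G = (\<Sum>a\<in>Poly_Mapping.keys F. \<Sum>b\<in>Poly_Mapping.keys G.
                  Poly_Mapping.single (a + b) (pcoeff F a * pcoeff G b))"
    by (subst sum_single_lookup[of F], subst sum_single_lookup[of G])
      (simp add: sum_product mult_single)
  then have "pleth (F * G) = (\<Sum>a\<in>Poly_Mapping.keys F. \<Sum>b\<in>Poly_Mapping.keys G.
      smult (scalar (pcoeff F a)) (prod_mset (image_mset pleth_factor a)) *
      smult (scalar (pcoeff G b)) (prod_mset (image_mset pleth_factor b)))"
    by (simp add: pleth_sum pleth_single scalar_mult mult_smult_left mult_smult_right smult_smult;
        simp add: mult.commute)
  then show ?thesis
    by (simp add: pleth_def sum_product)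
qed

lemma pleth_1: "pleth 1 = 1"
  using pleth_single[of "{#}" 1] by simp

lemma pleth_scalar: "pleth (scalar c) = [:scalar c:]"
  by (simp add: scalar_def pleth_single)

lemma pleth_of_nat: "pleth (of_nat n) = of_nat n"
  by (simp add: of_nat_sfun pleth_scalar of_nat_poly)

lemma pleth_power_sum: "pleth (power_sum k) = pleth_factor k"
  by (simp add: power_sum_def pleth_single)

lemma pleth_elem_part: "pleth (elem_part mu) = (\<Prod>r\<in>#mu. pleth (elem r))"
  by (induction mu) (simp_all add: elem_part_def pleth_1 pleth_mult)

lemma coeff_pleth_factor_mult:
  "coeff (pleth_factor i * Y) d =
     power_sum i * coeff Y d + (if i \<le> d then scalar (eps_power_sum i) * coeff Y (d - i) else 0)"
  by (simp add: pleth_factor_def distrib_right coeff_monom_mult)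

lemma psub_eq_coeff:
  "psub xs d lam = pcoeff (coeff (prod_list (map pleth_factor xs)) d) lam"
proof (induction xs arbitrary: d lam)
  case Nil
  then show ?case
    by (auto simp: sym_one_def lookup_one when_def)
next
  case (Cons k ks)
  have "pcoeff (power_sum k * X) = symprod (psym k) (pcoeff X)" for X
    by (simp add: pcoeff_times pcoeff_power_sum)
  moreover have "psub ks d' = pcoeff (coeff (prod_list (map pleth_factor ks)) d')" for d'
    using Cons.IH by (rule ext)
  ultimately show ?case
    by (simp add: coeff_pleth_factor_mult lookup_add pcoeff_scalar_times eps_power_sum_def)
qed

lemma psub_eq_0: "sum_list xs < d \<Longrightarrow> psub xs d lam = 0"
  by (induction xs arbitrary: d lam) (auto simp: symprod_def)

lemma psub_sorted_list_of_multiset: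
  "psub (sorted_list_of_multiset lam) d = pcoeff (coeff (prod_mset (image_mset pleth_factor lam)) d)"
proof -
  have "prod_list (map pleth_factor (sorted_list_of_multiset lam)) = prod_mset (image_mset pleth_factor lam)"
    by (metis mset_map mset_sorted_list_of_multiset prod_mset_prod_list)
  then show ?thesis
    by (simp add: psub_eq_coeff fun_eq_iff)
qed

lemma Bop_eq_pleth:
  assumes "\<And>lam. lam \<in> Poly_Mapping.keys F \<Longrightarrow> sum_mset lam \<le> D"
  shows "Bop a (pcoeff F) = pcoeff (\<Sum>d\<le>D. coeff (pleth F) d * elem (a + d))"
proof
  fix nu
  let ?M = "\<lambda>lam. prod_mset (image_mset pleth_factor lam)"
  let ?t = "\<lambda>lam d. pcoeff F lam * symprod (psub (sorted_list_of_multiset lam) d) (e_sym (a + d)) nu"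
  have inner: "(\<Sum>d\<in>{0..sum_mset lam}. ?t lam d) =
                 (\<Sum>d\<le>D. pcoeff (scalar (pcoeff F lam) * (coeff (?M lam) d * elem (a + d))) nu)"
    if "lam \<in> Poly_Mapping.keys F" for lam
  proof -
    have "(\<Sum>d\<in>{0..sum_mset lam}. ?t lam d) = (\<Sum>d\<le>D. ?t lam d)"
      using assms[OF that] sum_mset_sum_list[of "sorted_list_of_multiset lam"]
      by (intro sum.mono_neutral_left) (auto simp: psub_eq_0 symprod_def)
    also have "\<dots> = (\<Sum>d\<le>D. pcoeff (scalar (pcoeff F lam) * (coeff (?M lam) d * elem (a + d))) nu)"
      by (intro sum.cong refl, subst pcoeff_scalar_times)
        (simp add: pcoeff_times pcoeff_elem psub_sorted_list_of_multiset)
    finally show ?thesis .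
  qed
  have "Bop a (pcoeff F) nu =
          (\<Sum>lam\<in>Poly_Mapping.keys F. \<Sum>d\<le>D.
             pcoeff (scalar (pcoeff F lam) * (coeff (?M lam) d * elem (a + d))) nu)"
    unfolding Bop_def in_keys_iff[symmetric] Collect_mem_eq by (rule sum.cong[OF refl inner])
  also have "\<dots> = pcoeff (\<Sum>d\<le>D. coeff (pleth F) d * elem (a + d)) nu"
    by (subst sum.swap) (simp add: pleth_def coeff_sum lookup_sum sum_distrib_right mult.assoc)
  finally show "Bop a (pcoeff F) nu = pcoeff (\<Sum>d\<le>D. coeff (pleth F) d * elem (a + d)) nu" .
qed

lemma coeff_pleth_newton:
  "of_nat m * coeff (pleth (elem m)) d =
     (\<Sum>i\<in>{1..m}. scalar ((-1) ^ (i - 1)) * (power_sum i * coeff (pleth (elem (m - i))) d)) +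
     (\<Sum>i\<in>{1..m}. scalar ((-1) ^ (i - 1)) *
        (if i \<le> d then scalar (eps_power_sum i) * coeff (pleth (elem (m - i))) (d - i) else 0))"
proof -
  have "of_nat m * coeff (pleth (elem m)) d = coeff (pleth (of_nat m * elem m)) d"
    by (simp add: pleth_mult pleth_of_nat of_nat_poly)
  also have "\<dots> = (\<Sum>i\<in>{1..m}. scalar ((-1) ^ (i - 1)) *
                    coeff (pleth_factor i * pleth (elem (m - i))) d)"
    by (simp add: newton_identity pleth_sum pleth_mult pleth_scalar pleth_power_sum coeff_sum)
  finally show ?thesis
    by (simp add: coeff_pleth_factor_mult distrib_left sum.distrib)
qed

definition elem_eps_coeff :: "nat \<Rightarrow> nat \<Rightarrow> sfun" where
  "elem_eps_coeff m d = (if d \<le> m then scalar (eps_elem [:0, 1:] d) * elem (m - d) else 0)"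

lemma newton_power_sum_elem_eps_coeff:
  "(\<Sum>i\<in>{1..m}. scalar ((-1) ^ (i - 1)) * (power_sum i * elem_eps_coeff (m - i) d)) =
     of_nat (m - d) * elem_eps_coeff m d"
proof (cases "d \<le> m")
  case True
  let ?c = "scalar (eps_elem [:0, 1:] d)"
  have "(\<Sum>i\<in>{1..m}. scalar ((-1) ^ (i - 1)) * (power_sum i * elem_eps_coeff (m - i) d)) =
          (\<Sum>i\<in>{1..m}. if i \<le> m - d
             then ?c * (scalar ((-1) ^ (i - 1)) * (power_sum i * elem (m - d - i))) else 0)"
    by (intro sum.cong refl) (auto simp: elem_eps_coeff_def mult_ac add.commute)
  also have "\<dots> = ?c * (of_nat (m - d) * elem (m - d))"
    unfolding newton_identity sum_distrib_left by (intro sum.mono_neutral_cong_right) auto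
  finally show ?thesis
    using True by (simp add: elem_eps_coeff_def mult_ac)
qed (auto simp: elem_eps_coeff_def intro!: sum.neutral)

lemma newton_eps_power_sum_elem_eps_coeff:
  "(\<Sum>i\<in>{1..m}. scalar ((-1) ^ (i - 1)) *
      (if i \<le> d then scalar (eps_power_sum i) * elem_eps_coeff (m - i) (d - i) else 0)) =
     of_nat d * elem_eps_coeff m d"
proof (cases "d \<le> m")
  case True
  have "(\<Sum>i\<in>{1..m}. scalar ((-1) ^ (i - 1)) *
          (if i \<le> d then scalar (eps_power_sum i) * elem_eps_coeff (m - i) (d - i) else 0)) =
          (\<Sum>i\<in>{1..m}. if i \<le> d
             then scalar (([:0, 1:] ^ i - 1) * eps_elem [:0, 1:] (d - i)) * elem (m - d) else 0)"
    using True
    by (intro sum.cong refl) (auto simp: elem_eps_coeff_def scalar_mult mult.assoc simp flip: sign_eps_power_sum)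
  also have "\<dots> = scalar (of_nat d * eps_elem [:0, 1:] d) * elem (m - d)"
    unfolding eps_newton scalar_sum sum_distrib_right using True
    by (intro sum.mono_neutral_cong_right) auto
  finally show ?thesis
    using True by (simp add: elem_eps_coeff_def scalar_mult of_nat_sfun mult_ac)
next
  case False
  then show ?thesis
    by (auto simp: elem_eps_coeff_def intro!: sum.neutral)
qed

lemma coeff_pleth_elem: "coeff (pleth (elem m)) d = elem_eps_coeff m d"
proof (induction m arbitrary: d rule: less_induct)
  case (less m)
  show ?case
  proof (cases "m = 0")
    case True
    then show ?thesis
      by (simp add: pleth_1 coeff_1 elem_eps_coeff_def)
  next
    case False
    have IH: "coeff (pleth (elem (m - i))) d' = elem_eps_coeff (m - i) d'" if "i \<in> {1..m}" for i d'
      using that by (intro less.IH) auto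
    have "of_nat m * coeff (pleth (elem m)) d =
            (\<Sum>i\<in>{1..m}. scalar ((-1) ^ (i - 1)) * (power_sum i * elem_eps_coeff (m - i) d)) +
            (\<Sum>i\<in>{1..m}. scalar ((-1) ^ (i - 1)) *
               (if i \<le> d then scalar (eps_power_sum i) * elem_eps_coeff (m - i) (d - i) else 0))"
      unfolding coeff_pleth_newton by (intro arg_cong2[where f = "(+)"] sum.cong refl) (simp_all add: IH)
    also have "\<dots> = of_nat (m - d) * elem_eps_coeff m d + of_nat d * elem_eps_coeff m d"
      by (simp only: newton_power_sum_elem_eps_coeff newton_eps_power_sum_elem_eps_coeff)
    also have "\<dots> = of_nat m * elem_eps_coeff m d"
      by (auto simp: elem_eps_coeff_def simp flip: distrib_right of_nat_add)
    finally show ?thesis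
      using False sfun_of_nat_mult_cancel by blast
  qed
qed

section \<open>Positivity\<close>

definition nonneg_int_coeffs :: "'a :: linordered_idom poly \<Rightarrow> bool" where
  "nonneg_int_coeffs p \<longleftrightarrow> (\<forall>i. coeff p i \<in> \<int> \<and> coeff p i \<ge> 0)"

lemma nonneg_int_coeffs_0: "nonneg_int_coeffs 0"
  and nonneg_int_coeffs_1: "nonneg_int_coeffs 1"
  by (simp_all add: nonneg_int_coeffs_def coeff_1)

lemma nonneg_int_coeffs_add: "nonneg_int_coeffs p \<Longrightarrow> nonneg_int_coeffs q \<Longrightarrow> nonneg_int_coeffs (p + q)"
  by (simp add: nonneg_int_coeffs_def)

lemma nonneg_int_coeffs_mult: "nonneg_int_coeffs p \<Longrightarrow> nonneg_int_coeffs q \<Longrightarrow> nonneg_int_coeffs (p * q)"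
  unfolding nonneg_int_coeffs_def coeff_mult
  by (auto intro!: Ints_sum Ints_mult sum_nonneg)

lemma nonneg_int_coeffs_pCons:
  "c \<in> \<int> \<Longrightarrow> c \<ge> 0 \<Longrightarrow> nonneg_int_coeffs p \<Longrightarrow> nonneg_int_coeffs (pCons c p)"
  by (auto simp: nonneg_int_coeffs_def coeff_pCons split: nat.splits)

definition shift_nonneg :: "'a :: linordered_idom poly \<Rightarrow> bool" where
  "shift_nonneg p \<longleftrightarrow> nonneg_int_coeffs (pcompose p [:1, 1:])"

lemma shift_nonneg_0: "shift_nonneg 0"
  and shift_nonneg_1: "shift_nonneg 1"
  by (simp_all add: shift_nonneg_def nonneg_int_coeffs_0 nonneg_int_coeffs_1 pcompose_1)

lemma shift_nonneg_add: "shift_nonneg p \<Longrightarrow> shift_nonneg q \<Longrightarrow> shift_nonneg (p + q)"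
  by (simp add: shift_nonneg_def pcompose_add nonneg_int_coeffs_add)

lemma shift_nonneg_mult: "shift_nonneg p \<Longrightarrow> shift_nonneg q \<Longrightarrow> shift_nonneg (p * q)"
  by (simp add: shift_nonneg_def pcompose_mult nonneg_int_coeffs_mult)

lemma shift_nonneg_sum: "(\<And>i. i \<in> A \<Longrightarrow> shift_nonneg (f i)) \<Longrightarrow> shift_nonneg (sum f A)"
  by (induction A rule: infinite_finite_induct) (auto simp: shift_nonneg_0 shift_nonneg_add)

lemma shift_nonneg_power: "shift_nonneg p \<Longrightarrow> shift_nonneg (p ^ n)"
  by (induction n) (auto simp: shift_nonneg_1 shift_nonneg_mult)

lemma shift_nonneg_eps_elem: "shift_nonneg (eps_elem [:0, 1 :: 'a :: linordered_idom:] k)"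
proof (cases k)
  case (Suc j)
  have "pcompose [:0, 1 :: 'a:] [:1, 1:] = [:1, 1:]" "pcompose ([:0, 1 :: 'a:] - 1) [:1, 1:] = [:0, 1:]"
    by (simp_all add: pcompose_pCons pcompose_diff one_pCons)
  then have "shift_nonneg [:0, 1 :: 'a:]" "shift_nonneg ([:0, 1 :: 'a:] - 1)"
    by (simp_all add: shift_nonneg_def nonneg_int_coeffs_pCons nonneg_int_coeffs_0)
  with Suc show ?thesis
    by (simp add: shift_nonneg_mult shift_nonneg_power)
qed (simp add: shift_nonneg_1)

definition e_positive :: "nat \<Rightarrow> sfun \<Rightarrow> bool" where
  "e_positive N x \<longleftrightarrow>
     (\<exists>c. (\<forall>nu. shift_nonneg (c nu)) \<and> x = (\<Sum>nu\<in>partitions N. scalar (c nu) * elem_part nu))"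

lemma e_positive_0: "e_positive N 0"
  unfolding e_positive_def by (intro exI[of _ "\<lambda>_. 0"]) (simp add: shift_nonneg_0)

lemma e_positive_add:
  assumes "e_positive N x" "e_positive N y"
  shows "e_positive N (x + y)"
proof -
  obtain c1 where "\<forall>nu. shift_nonneg (c1 nu)" "x = (\<Sum>nu\<in>partitions N. scalar (c1 nu) * elem_part nu)"
    using assms(1) unfolding e_positive_def by blast
  moreover obtain c2 where "\<forall>nu. shift_nonneg (c2 nu)" "y = (\<Sum>nu\<in>partitions N. scalar (c2 nu) * elem_part nu)"
    using assms(2) unfolding e_positive_def by blast
  ultimately show ?thesis
    unfolding e_positive_def
    by (intro exI[of _ "\<lambda>nu. c1 nu + c2 nu"]) (simp add: shift_nonneg_add scalar_add distrib_right sum.distrib)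
qed

lemma e_positive_sum: "(\<And>i. i \<in> A \<Longrightarrow> e_positive N (f i)) \<Longrightarrow> e_positive N (sum f A)"
  by (induction A rule: infinite_finite_induct) (auto simp: e_positive_0 e_positive_add)

lemma e_positive_scalar_mult:
  assumes "shift_nonneg c" "e_positive N x"
  shows "e_positive N (scalar c * x)"
proof -
  obtain c1 where "\<forall>nu. shift_nonneg (c1 nu)" "x = (\<Sum>nu\<in>partitions N. scalar (c1 nu) * elem_part nu)"
    using assms(2) unfolding e_positive_def by blast
  with assms(1) show ?thesis
    unfolding e_positive_def
    by (intro exI[of _ "\<lambda>nu. c * c1 nu"]) (simp add: shift_nonneg_mult scalar_mult sum_distrib_left mult.assoc)
qed

lemma e_positive_elem: "e_positive r (elem r)"
proof -
  define mu where "mu = (if r = 0 then {#} else {#r#})"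
  have "mu \<in> partitions r" "elem_part mu = elem r"
    by (simp_all add: mu_def partitions_def is_partition_def elem_part_def)
  moreover have "(\<Sum>nu\<in>partitions r. scalar (if nu = mu then 1 else 0) * elem_part nu) =
                  (\<Sum>nu\<in>partitions r. if nu = mu then elem_part nu else 0)"
    by (intro sum.cong) auto
  ultimately have "elem r = (\<Sum>nu\<in>partitions r. scalar (if nu = mu then 1 else 0) * elem_part nu)"
    by (simp add: finite_partitions)
  then show ?thesis
    unfolding e_positive_def by (intro exI[of _ "\<lambda>nu. if nu = mu then 1 else 0"])
      (simp add: shift_nonneg_0 shift_nonneg_1)
qed

lemma e_positive_mult:
  assumes "e_positive N x" "e_positive K y"
  shows "e_positive (N + K) (x * y)"
proof -
  obtain c1 where c1: "\<forall>nu. shift_nonneg (c1 nu)" "x = (\<Sum>nu\<in>partitions N. scalar (c1 nu) * elem_part nu)"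
    using assms(1) unfolding e_positive_def by blast
  obtain c2 where c2: "\<forall>nu. shift_nonneg (c2 nu)" "y = (\<Sum>nu\<in>partitions K. scalar (c2 nu) * elem_part nu)"
    using assms(2) unfolding e_positive_def by blast
  let ?S = "partitions N \<times> partitions K"
  define c where "c rho = (\<Sum>p\<in>{p\<in>?S. fst p + snd p = rho}. c1 (fst p) * c2 (snd p))" for rho
  have "x * y = (\<Sum>p\<in>?S. scalar (c1 (fst p) * c2 (snd p)) * elem_part (fst p + snd p))"
    unfolding c1(2) c2(2) sum_product sum.cartesian_product
    by (intro sum.cong) (auto simp: scalar_mult elem_part_add mult_ac)
  also have "\<dots> = (\<Sum>rho\<in>partitions (N + K). \<Sum>p\<in>{p\<in>?S. fst p + snd p = rho}.
                     scalar (c1 (fst p) * c2 (snd p)) * elem_part (fst p + snd p))"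
    by (rule sum.group[symmetric]) (auto simp: finite_partitions partitions_add)
  also have "\<dots> = (\<Sum>rho\<in>partitions (N + K). scalar (c rho) * elem_part rho)"
    unfolding c_def scalar_sum sum_distrib_right by (intro sum.cong) auto
  finally show ?thesis
    unfolding e_positive_def using c1(1) c2(1)
    by (intro exI[of _ c]) (auto simp: c_def intro!: shift_nonneg_sum shift_nonneg_mult)
qed

definition graded_e_positive :: "nat \<Rightarrow> sfun poly \<Rightarrow> bool" where
  "graded_e_positive N P \<longleftrightarrow> degree P \<le> N \<and> (\<forall>d\<le>N. e_positive (N - d) (coeff P d))"

lemma graded_e_positive_1: "graded_e_positive 0 1"
  using e_positive_elem[of 0] by (simp add: graded_e_positive_def)

lemma graded_e_positive_mult:
  assumes P: "graded_e_positive N P" and R: "graded_e_positive K R"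
  shows "graded_e_positive (N + K) (P * R)"
  unfolding graded_e_positive_def
proof (intro conjI allI impI)
  show "degree (P * R) \<le> N + K"
    using P R degree_mult_le[of P R] by (simp add: graded_e_positive_def)
  fix d assume "d \<le> N + K"
  have "e_positive (N + K - d) (coeff P i * coeff R (d - i))" if "i \<le> d" for i
  proof (cases "i \<le> N \<and> d - i \<le> K")
    case True
    then have "e_positive ((N - i) + (K - (d - i))) (coeff P i * coeff R (d - i))"
      using P R by (intro e_positive_mult) (auto simp: graded_e_positive_def)
    moreover have "(N - i) + (K - (d - i)) = N + K - d"
      using True that by arith
    ultimately show ?thesis by simp
  next
    case False
    then have "coeff P i = 0 \<or> coeff R (d - i) = 0"
      using P R by (auto simp: graded_e_positive_def intro: coeff_eq_0)
    then show ?thesis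
      by (auto simp: e_positive_0)
  qed
  then show "e_positive (N + K - d) (coeff (P * R) d)"
    unfolding coeff_mult by (intro e_positive_sum) auto
qed

lemma graded_e_positive_prod_mset:
  "(\<And>x. x \<in># M \<Longrightarrow> graded_e_positive (n x) (P x)) \<Longrightarrow>
     graded_e_positive (\<Sum>x\<in>#M. n x) (\<Prod>x\<in>#M. P x)"
  by (induction M) (auto simp: graded_e_positive_1 graded_e_positive_mult)

lemma graded_e_positive_pleth_elem: "graded_e_positive m (pleth (elem m))"
  unfolding graded_e_positive_def
  by (auto simp: coeff_pleth_elem elem_eps_coeff_def intro!: degree_le e_positive_scalar_mult shift_nonneg_eps_elem e_positive_elem)

lemma e_positive_Bop_sum:
  assumes "graded_e_positive n P"
  shows "e_positive (n + a) (\<Sum>d\<le>D. coeff P d * elem (a + d))"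
proof (intro e_positive_sum)
  fix d
  show "e_positive (n + a) (coeff P d * elem (a + d))"
  proof (cases "d \<le> n")
    case True
    then have "e_positive ((n - d) + (a + d)) (coeff P d * elem (a + d))"
      using assms by (intro e_positive_mult e_positive_elem) (simp add: graded_e_positive_def)
    with True show ?thesis by simp
  next
    case False
    then have "coeff P d = 0"
      using assms by (intro coeff_eq_0) (simp add: graded_e_positive_def)
    then show ?thesis
      by (simp add: e_positive_0)
  qed
qed

definition q_free :: "sfun \<Rightarrow> bool" where
  "q_free x \<longleftrightarrow> (\<forall>lam. degree (pcoeff x lam) = 0)"

lemma q_free_mult:
  assumes "q_free x" "q_free y"
  shows "q_free (x * y)"
  unfolding q_free_def
proof
  fix lam
  have "degree (pcoeff x a * pcoeff y b) = 0" for a b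
    using assms degree_mult_le[of "pcoeff x a" "pcoeff y b"] by (simp add: q_free_def)
  then have "degree (symprod (pcoeff x) (pcoeff y) lam) \<le> 0"
    unfolding symprod_def by (intro degree_sum_le) (simp_all add: finite_submultisets)
  then show "degree (pcoeff (x * y) lam) = 0"
    by (simp add: pcoeff_times)
qed

lemma q_free_elem_part: "q_free (elem_part nu)"
proof (induction nu)
  case empty
  then show ?case
    by (simp add: q_free_def elem_part_def lookup_one when_def)
next
  case (add r nu)
  have "q_free (elem r)"
    by (simp add: q_free_def pcoeff_elem e_sym_def)
  with add.IH show ?case
    by (simp add: elem_part_def q_free_mult)
qed

lemma q_shift_e_positive:
  assumes "e_positive N X"
  shows "\<exists>Q :: nat multiset \<Rightarrow> int poly. (\<forall>nu i. coeff (Q nu) i \<ge> 0) \<and>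
           q_shift (pcoeff X) = (\<lambda>lam. \<Sum>nu\<in>partitions N. map_poly of_int (Q nu) * e_part nu lam)"
proof -
  obtain c where c: "\<forall>nu. shift_nonneg (c nu)" and X: "X = (\<Sum>nu\<in>partitions N. scalar (c nu) * elem_part nu)"
    using assms unfolding e_positive_def by blast
  define Q where "Q nu = map_poly floor (pcompose (c nu) [:1, 1:])" for nu
  have coeff_Q: "coeff (Q nu) i = floor (coeff (pcompose (c nu) [:1, 1:]) i)" for nu i
    by (simp add: Q_def coeff_map_poly)
  have "map_poly of_int (Q nu) = pcompose (c nu) [:1, 1:]" for nu
    using c by (intro poly_eqI) (simp add: coeff_map_poly coeff_Q shift_nonneg_def nonneg_int_coeffs_def)
  moreover have "degree (e_part nu lam) = 0" for nu lam
    using q_free_elem_part[of nu] by (simp add: q_free_def pcoeff_elem_part)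
  then have "pcompose (e_part nu lam) [:1, 1:] = e_part nu lam" for nu lam
    by (metis degree_eq_zeroE pcompose_const)
  ultimately have "q_shift (pcoeff X) = (\<lambda>lam. \<Sum>nu\<in>partitions N. map_poly of_int (Q nu) * e_part nu lam)"
    by (intro ext) (simp add: q_shift_def X lookup_sum pcoeff_scalar_times pcoeff_elem_part pcompose_sum pcompose_mult)
  moreover have "\<forall>nu i. coeff (Q nu) i \<ge> 0"
    using c by (simp add: coeff_Q shift_nonneg_def nonneg_int_coeffs_def)
  ultimately show ?thesis
    by blast
qed

theorem proposition2p1:
  fixes a :: nat and mu :: "nat multiset"
  assumes "a \<ge> 1" and "is_partition mu"
  shows "\<exists>Q :: nat multiset \<Rightarrow> int poly.
           (\<forall>nu i. coeff (Q nu) i \<ge> 0) \<and>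
           q_shift (Bop a (e_part mu)) =
             (\<lambda>lam. \<Sum>nu\<in>{nu. is_partition nu \<and> sum_mset nu = sum_mset mu + a}.
                       map_poly of_int (Q nu) * e_part nu lam)"
proof -
  obtain D where D_bound: "\<And>lam. lam \<in> Poly_Mapping.keys (elem_part mu) \<Longrightarrow> sum_mset lam \<le> D"
    using finite_nat_set_iff_bounded_le[of "sum_mset ` Poly_Mapping.keys (elem_part mu)"] by auto
  define X where "X = (\<Sum>d\<le>D. coeff (pleth (elem_part mu)) d * elem (a + d))"
  have "graded_e_positive (sum_mset mu) (pleth (elem_part mu))"
    using graded_e_positive_prod_mset[of mu "\<lambda>r. r" "\<lambda>r. pleth (elem r)"]
    by (simp add: pleth_elem_part graded_e_positive_pleth_elem)
  then have "e_positive (sum_mset mu + a) X"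
    unfolding X_def by (rule e_positive_Bop_sum)
  moreover have "Bop a (e_part mu) = pcoeff X"
    using Bop_eq_pleth[of "elem_part mu" D a] D_bound by (simp add: X_def pcoeff_elem_part)
  ultimately show ?thesis
    using q_shift_e_positive[of "sum_mset mu + a" X] unfolding partitions_def by simp
qed

end
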